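(* Let $a_1,a_2,a_3,b_1,b_2,b_3$ be real numbers and let $\{T(n,k)\}_{n,k\ge 0}$ be an array of nonnegative real numbers with $T(0,0)\ge0$, $T(n,k)=0$ unless $0\le k\le n$, satisfying for $n\ge 1$ $$T(n,k)=(a_1n+a_2k+a_3)T(n-1,k)+(b_1n+b_2k+b_3)T(n-1,k-1),$$ where $a_1n+a_2k+a_3\ge 0$ whenever $0\le k<n$ and $b_1n+b_2k+b_3\ge 0$ whenever $0<k\le n$. Suppose moreover that $$(a_2b_1-a_1b_2)n+a_2b_2k+(a_2b_3-a_3b_2)\ge 0\quad\text{for all } n\ge 1,\ 0<k\le n.$$ Let $T_n(q)=\sum_{k=0}^nT(n,k)q^k$. Then the sequence $\{T_n(q)\}_{n\ge 0}$ is $q$-log-convex.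
   Context: For real polynomials $f(q),g(q)$ write $f(q)\le_q g(q)$ if $g(q)-f(q)$ has nonnegative coefficients. A sequence of real polynomials $\{P_n(q)\}_{n\ge0}$ is $q$-log-convex if $P_n(q)^2\le_q P_{n-1}(q)P_{n+1}(q)$ for all $n\ge 1$. *)

theory Defs
  imports "HOL-Computational_Algebra.Polynomial"
begin

definition q_le :: "real poly \<Rightarrow> real poly \<Rightarrow> bool" where
  "q_le f g \<longleftrightarrow> (\<forall>i. coeff (g - f) i \<ge> 0)"

definition q_log_convex :: "(nat \<Rightarrow> real poly) \<Rightarrow> bool" where
  "q_log_convex P \<longleftrightarrow> (\<forall>n\<ge>1. q_le ((P n)\<^sup>2) (P (n - 1) * P (n + 1)))"

definition row_poly :: "(nat \<Rightarrow> int \<Rightarrow> real) \<Rightarrow> nat \<Rightarrow> real poly" where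
  "row_poly T n = (\<Sum>k\<le>n. monom (T n (int k)) k)"

end

theory Submission
  imports Defs
begin

text \<open>The recurrence gives, coefficientwise,
  T_{n-1} T_{n+1} - T_n^2 = (a1 + b1 q) T_{n-1} T_n + (a2 + b2 q) q (T_{n-1} T_n' - T_{n-1}' T_n),
and the hypotheses force a1, a1 + a2, b1, b1 + b2 \<ge> 0. So the right side has nonnegative
coefficients as soon as each coefficient of q (T_{n-1} T_n' - T_{n-1}' T_n) lies between 0 and the
corresponding coefficient of T_{n-1} T_n, and pairing the terms k and M - k of these convolutions
shows that this follows from the ratio monotonicity of consecutive rows: k \<mapsto> T(n,k)/T(n-1,k)
increases and k \<mapsto> T(n,k+1)/T(n-1,k) decreases. For neighbouring k these are 2 \<times> 2 minors, and
explicit identities express the minors of rows n, n + 1 through those of rows n - 1, n with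
nonnegative coefficients, so they propagate by induction on n. Passing from neighbouring to
arbitrary k needs the entries inside the triangle to be positive; this is arranged by perturbing
a3, b3 and T(0,0) upwards and taking the limit, except in two degenerate cases where every row has
a single nonzero entry.\<close>

definition lin_coeff :: "real \<Rightarrow> real \<Rightarrow> real \<Rightarrow> nat \<Rightarrow> int \<Rightarrow> real" where
  "lin_coeff u1 u2 u3 n k = u1 * real n + u2 * real_of_int k + u3"

lemma lin_coeff_shift:
  "lin_coeff u1 u2 u3 (Suc n) k = lin_coeff u1 u2 u3 n k + u1"
  "lin_coeff u1 u2 u3 n (k + 1) = lin_coeff u1 u2 u3 n k + u2"
  "lin_coeff u1 u2 u3 n (k + 2) = lin_coeff u1 u2 u3 n k + 2 * u2"
  "lin_coeff u1 u2 u3 n (k - 1) = lin_coeff u1 u2 u3 n k - u2"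
  by (simp_all add: lin_coeff_def algebra_simps)

fun rec_triangle :: "(nat \<Rightarrow> int \<Rightarrow> real) \<Rightarrow> (nat \<Rightarrow> int \<Rightarrow> real) \<Rightarrow> real \<Rightarrow> nat \<Rightarrow> int \<Rightarrow> real" where
  "rec_triangle A B c 0 k = (if k = 0 then c else 0)"
| "rec_triangle A B c (Suc n) k =
     A (Suc n) k * rec_triangle A B c n k + B (Suc n) k * rec_triangle A B c n (k - 1)"

lemma rec_triangle_eq_0: "k < 0 \<or> int n < k \<Longrightarrow> rec_triangle A B c n k = 0"
  by (induction n arbitrary: k) auto

lemma rec_triangle_unique:
  assumes "\<And>k. k \<noteq> 0 \<Longrightarrow> T 0 k = 0"
    and "\<And>n k. T (Suc n) k = A (Suc n) k * T n k + B (Suc n) k * T n (k - 1)"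
  shows "T = rec_triangle A B (T 0 0)"
proof (intro ext)
  fix n k
  show "T n k = rec_triangle A B (T 0 0) n k"
    using assms by (induction n arbitrary: k) auto
qed

lemma rec_triangle_nonneg:
  assumes "0 \<le> c"
    and A: "\<And>n k. 0 \<le> k \<Longrightarrow> k < int n \<Longrightarrow> 0 \<le> A n k"
    and B: "\<And>n k. 0 < k \<Longrightarrow> k \<le> int n \<Longrightarrow> 0 \<le> B n k"
  shows "0 \<le> rec_triangle A B c n k"
proof (induction n arbitrary: k)
  case 0
  then show ?case using \<open>0 \<le> c\<close> by simp
next
  case (Suc n)
  have "0 \<le> A (Suc n) k * rec_triangle A B c n k"
    using A[of k "Suc n"] Suc.IH[of k] rec_triangle_eq_0[of k n]
    by (cases "0 \<le> k \<and> k < int (Suc n)") auto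
  moreover have "0 \<le> B (Suc n) k * rec_triangle A B c n (k - 1)"
    using B[of k "Suc n"] Suc.IH[of "k - 1"] rec_triangle_eq_0[of "k - 1" n]
    by (cases "0 < k \<and> k \<le> int (Suc n)") auto
  ultimately show ?case by simp
qed

lemma rec_triangle_pos:
  assumes "0 < c"
    and A: "\<And>n k. 0 \<le> k \<Longrightarrow> k < int n \<Longrightarrow> 0 < A n k"
    and B: "\<And>n k. 0 < k \<Longrightarrow> k \<le> int n \<Longrightarrow> 0 < B n k"
  shows "0 \<le> k \<Longrightarrow> k \<le> int n \<Longrightarrow> 0 < rec_triangle A B c n k"
proof (induction n arbitrary: k)
  case 0
  then show ?case using \<open>0 < c\<close> by simp
next
  case (Suc n)
  have nonneg: "0 \<le> rec_triangle A B c n j" for j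
    using rec_triangle_nonneg[of c A B] assms by (simp add: less_imp_le)
  show ?case
  proof (cases "k \<le> int n")
    case True
    have "0 < A (Suc n) k * rec_triangle A B c n k"
      using A[of k "Suc n"] Suc True by simp
    moreover have "0 \<le> B (Suc n) k * rec_triangle A B c n (k - 1)"
      using B[of k "Suc n"] nonneg[of "k - 1"] rec_triangle_eq_0[of "k - 1" n] Suc True
      by (cases "k = 0") auto
    ultimately show ?thesis by simp
  next
    case False
    then have "k = int n + 1" using Suc by simp
    then show ?thesis using B[of k "Suc n"] Suc.IH[of "k - 1"] rec_triangle_eq_0[of k n] by simp
  qed
qed

lemma tendsto_rec_triangle:
  assumes "\<And>n k. ((\<lambda>e. A e n k) \<longlongrightarrow> A0 n k) F"
    and "\<And>n k. ((\<lambda>e. B e n k) \<longlongrightarrow> B0 n k) F"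
    and "(c \<longlongrightarrow> c0) F"
  shows "((\<lambda>e. rec_triangle (A e) (B e) (c e) n k) \<longlongrightarrow> rec_triangle A0 B0 c0 n k) F"
  using assms by (induction n arbitrary: k) (auto intro!: tendsto_intros)

lemma rec_triangle_diagonal:
  assumes "\<And>n k. A (Suc n) k = 0" and "k \<noteq> int n"
  shows "rec_triangle A B c n k = 0"
  using assms(2) by (induction n arbitrary: k) (auto simp: assms(1))

lemma rec_triangle_first_column:
  assumes "\<And>n k. B (Suc n) k = 0" and "k \<noteq> 0"
  shows "rec_triangle A B c n k = 0"
  using assms(2) by (induction n arbitrary: k) (auto simp: assms(1))

text \<open>For positive entries, \<open>0 \<le> minor S m k\<close> says that S (m+1) k / S m k does not decrease
  from k to k + 1, and \<open>0 \<le> shifted_minor S m k\<close> that S (m+1) (k+1) / S m k does not increase.\<close>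

definition minor :: "(nat \<Rightarrow> int \<Rightarrow> real) \<Rightarrow> nat \<Rightarrow> int \<Rightarrow> real" where
  "minor S m k = S m k * S (Suc m) (k + 1) - S m (k + 1) * S (Suc m) k"

definition shifted_minor :: "(nat \<Rightarrow> int \<Rightarrow> real) \<Rightarrow> nat \<Rightarrow> int \<Rightarrow> real" where
  "shifted_minor S m k = S m (k + 1) * S (Suc m) (k + 1) - S m k * S (Suc m) (k + 2)"

context
  fixes S :: "nat \<Rightarrow> int \<Rightarrow> real" and x1 x2 x3 y1 y2 y3 :: real
  assumes rec: "\<And>n k. S (Suc n) k =
    lin_coeff x1 x2 x3 (Suc n) k * S n k + lin_coeff y1 y2 y3 (Suc n) k * S n (k - 1)"
begin

private lemma index_arith:
  "k - 1 + 1 = k" "k - 1 + 2 = k + 1" "k + 1 - 1 = k" "k + 2 - 1 = k + 1" "k - 1 + 2 - 1 = k"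
  for k :: int
  by simp_all

lemma minor_Suc_eq:
  "S m k * minor S (Suc m) k =
      lin_coeff x1 x2 x3 (Suc m) (k + 1) * S (Suc m) k * minor S m k
    + lin_coeff y1 y2 y3 (Suc (Suc m)) k * S (Suc m) (k + 1) * minor S m (k - 1)
    + y1 * S (Suc m) k * shifted_minor S m (k - 1)"
  unfolding minor_def shifted_minor_def rec by (simp only: index_arith lin_coeff_shift) algebra

lemma shifted_minor_Suc_eq:
  "S m k * shifted_minor S (Suc m) k =
      lin_coeff y1 y2 y3 (Suc m) k * S (Suc m) (k + 1) * shifted_minor S m (k - 1)
    + lin_coeff x1 x2 x3 (Suc (Suc m)) (k + 2) * S (Suc m) k * shifted_minor S m k
    + (x1 + x2) * S (Suc m) (k + 1) * minor S m k"
  unfolding minor_def shifted_minor_def rec by (simp only: index_arith lin_coeff_shift) algebra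

text \<open>At the top and bottom edges the coefficients of the two identities above may be negative
  (when x2 < 0, resp. y2 > 0); these variants regroup them around the cross term at k = 1.\<close>

lemma minor_Suc_eq_top:
  assumes "S m (k + 1) = 0"
  shows "S m k * minor S (Suc m) k =
      lin_coeff y1 y2 y3 (Suc (Suc m)) k * S (Suc m) (k + 1) * minor S m (k - 1)
    + S (Suc m) k * S m k *
      ((x2 * lin_coeff y1 y2 y3 (Suc m) 1 - y2 * lin_coeff x1 x2 x3 (Suc m) 0
        + lin_coeff y1 y2 y3 (Suc (Suc m)) (k + 2) * lin_coeff x1 x2 x3 (Suc m) k) * S m k
       - y1 * y2 * S m (k - 1))"
  unfolding minor_def shifted_minor_def rec assms
  by (simp only: index_arith lin_coeff_def of_int_add of_int_diff of_int_1 of_int_0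
      of_int_numeral of_nat_Suc) algebra

lemma shifted_minor_Suc_eq_bottom:
  assumes "S m (-1) = 0"
  shows "S m 0 * shifted_minor S (Suc m) 0 =
      lin_coeff x1 x2 x3 (Suc (Suc m)) 2 * S (Suc m) 0 * shifted_minor S m 0
    + S (Suc m) 1 * S m 0 *
      ((x2 * lin_coeff y1 y2 y3 (Suc m) 1 - y2 * lin_coeff x1 x2 x3 (Suc m) 0
        + lin_coeff x1 x2 x3 (Suc (Suc m)) 0 * lin_coeff y1 y2 y3 (Suc m) 1) * S m 0
       + (x1 + x2) * x2 * S m 1)"
  unfolding minor_def shifted_minor_def rec by (simp add: assms lin_coeff_def) algebra

end

text \<open>The two ratio monotonicities of consecutive rows, cross-multiplied so that zero entries are
  allowed.\<close>

definition row_ratio_monotone :: "(nat \<Rightarrow> int \<Rightarrow> real) \<Rightarrow> bool" where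
  "row_ratio_monotone T \<longleftrightarrow> (\<forall>m I J. I < J \<longrightarrow>
     T m J * T (Suc m) I \<le> T m I * T (Suc m) J \<and>
     T m I * T (Suc m) (J + 1) \<le> T m J * T (Suc m) (I + 1))"

lemma cross_le_of_consecutive:
  fixes p u :: "int \<Rightarrow> real"
  assumes pos: "\<And>k. a \<le> k \<Longrightarrow> k \<le> b \<Longrightarrow> 0 < p k"
    and consecutive: "\<And>k. a \<le> k \<Longrightarrow> k < b \<Longrightarrow> p (k + 1) * u k \<le> p k * u (k + 1)"
    and "a \<le> I" "I \<le> J" "J \<le> b"
  shows "p J * u I \<le> p I * u J"
  using \<open>I \<le> J\<close> \<open>J \<le> b\<close>
proof (induction J rule: int_ge_induct)
  case base
  then show ?case by simp
next
  case (step J)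
  have pJ: "0 < p J" and pI: "0 < p I" and pJ1: "0 < p (J + 1)"
    using pos step \<open>a \<le> I\<close> by auto
  have "p J * (p (J + 1) * u I) = p (J + 1) * (p J * u I)" by simp
  also have "\<dots> \<le> p (J + 1) * (p I * u J)"
    using step pJ1 by (simp add: mult_left_mono)
  also have "\<dots> = p I * (p (J + 1) * u J)" by simp
  also have "\<dots> \<le> p I * (p J * u (J + 1))"
    using consecutive[of J] step \<open>a \<le> I\<close> pI by (simp add: mult_left_mono)
  also have "\<dots> = p J * (p I * u (J + 1))" by simp
  finally show ?case using pJ by simp
qed

lemma row_ratio_monotone_if_minors_nonneg:
  assumes zero: "\<And>n k. k < 0 \<or> int n < k \<Longrightarrow> T n k = 0"
    and pos: "\<And>n k. 0 \<le> k \<Longrightarrow> k \<le> int n \<Longrightarrow> 0 < T n k"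
    and minor: "\<And>m k. 0 \<le> minor T m k"
    and shifted_minor: "\<And>m k. 0 \<le> shifted_minor T m k"
  shows "row_ratio_monotone T"
  unfolding row_ratio_monotone_def
proof (intro allI impI conjI)
  fix m :: nat and I J :: int
  assume "I < J"
  have nonneg: "0 \<le> T n k" for n k
    using zero[of k n] pos[of k n] by (cases "k < 0 \<or> int n < k") auto
  show "T m J * T (Suc m) I \<le> T m I * T (Suc m) J"
  proof (cases "0 \<le> I \<and> J \<le> int m")
    case True
    show ?thesis
    proof (rule cross_le_of_consecutive[where a = 0 and b = "int m"])
      show "T m (k + 1) * T (Suc m) k \<le> T m k * T (Suc m) (k + 1)" for k
        using minor[of m k] by (simp add: minor_def)
    qed (use True \<open>I < J\<close> pos in auto)
  next
    case False
    then show ?thesis using zero[of I] zero[of J m] nonneg by auto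
  qed
  show "T m I * T (Suc m) (J + 1) \<le> T m J * T (Suc m) (I + 1)"
  proof (cases "0 \<le> I \<and> J \<le> int m")
    case True
    have "T m J * - T (Suc m) (I + 1) \<le> T m I * - T (Suc m) (J + 1)"
    proof (rule cross_le_of_consecutive[where a = 0 and b = "int m"])
      show "T m (k + 1) * - T (Suc m) (k + 1) \<le> T m k * - T (Suc m) (k + 1 + 1)" for k
        using shifted_minor[of m k] by (simp add: shifted_minor_def add.assoc)
    qed (use True \<open>I < J\<close> pos in auto)
    then show ?thesis by simp
  next
    case False
    then show ?thesis using zero[of I] zero[of J m] zero[of "J + 1" "Suc m"] nonneg by auto
  qed
qed

lemma minors_nonneg_outside:
  assumes zero: "\<And>n k. k < 0 \<or> int n < k \<Longrightarrow> T n k = 0"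
    and nonneg: "\<And>n k. 0 \<le> T n k"
    and "k < 0 \<or> int m \<le> k"
  shows "0 \<le> minor T m k \<and> 0 \<le> shifted_minor T m k"
  using assms(3) zero[of k m] zero[of k "Suc m"] zero[of "k + 1" m] zero[of "k + 2" "Suc m"]
  by (auto simp: minor_def shifted_minor_def nonneg)

locale positive_lin_triangle =
  fixes x1 x2 x3 y1 y2 y3 c :: real
  assumes c_pos: "0 < c"
    and A_pos: "\<And>n k. 0 \<le> k \<Longrightarrow> k < int n \<Longrightarrow> 0 < lin_coeff x1 x2 x3 n k"
    and B_pos: "\<And>n k. 0 < k \<Longrightarrow> k \<le> int n \<Longrightarrow> 0 < lin_coeff y1 y2 y3 n k"
    and y1_nonneg: "0 \<le> y1"
    and x1_x2_nonneg: "0 \<le> x1 + x2"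
    and signs: "\<not> (x2 < 0 \<and> 0 < y2)"
    and cross_nonneg: "\<And>n. 1 \<le> n \<Longrightarrow> 0 \<le> x2 * lin_coeff y1 y2 y3 n 1 - y2 * lin_coeff x1 x2 x3 n 0"
begin

abbreviation S :: "nat \<Rightarrow> int \<Rightarrow> real" where
  "S \<equiv> rec_triangle (lin_coeff x1 x2 x3) (lin_coeff y1 y2 y3) c"

lemma S_eq_0: "k < 0 \<or> int n < k \<Longrightarrow> S n k = 0"
  by (rule rec_triangle_eq_0)

lemma S_pos: "0 \<le> k \<Longrightarrow> k \<le> int n \<Longrightarrow> 0 < S n k"
  using c_pos A_pos B_pos by (rule rec_triangle_pos)

lemma S_nonneg: "0 \<le> S n k"
  using S_eq_0[of k n] S_pos[of k n] by (cases "k < 0 \<or> int n < k") auto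

lemmas S_identities =
  minor_Suc_eq[of S, OF rec_triangle.simps(2)]
  shifted_minor_Suc_eq[of S, OF rec_triangle.simps(2)]
  minor_Suc_eq_top[of S, OF rec_triangle.simps(2)]
  shifted_minor_Suc_eq_bottom[of S, OF rec_triangle.simps(2)]

lemma minor_left_term_nonneg:
  assumes "0 \<le> minor S m (k - 1)" "0 \<le> k" "k \<le> int m"
  shows "0 \<le> lin_coeff y1 y2 y3 (Suc (Suc m)) k * S (Suc m) (k + 1) * minor S m (k - 1)"
proof (cases "k = 0")
  case True
  then show ?thesis by (simp add: minor_def S_eq_0)
next
  case False
  then show ?thesis using B_pos[of k "Suc (Suc m)"] assms
    by (intro mult_nonneg_nonneg S_nonneg) simp_all
qed

lemma shifted_minor_right_term_nonneg:
  assumes "0 \<le> shifted_minor S m k" "0 \<le> k" "k \<le> int m"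
  shows "0 \<le> lin_coeff x1 x2 x3 (Suc (Suc m)) (k + 2) * S (Suc m) k * shifted_minor S m k"
proof (cases "k = int m")
  case True
  then show ?thesis by (simp add: shifted_minor_def S_eq_0)
next
  case False
  then show ?thesis using A_pos[of "k + 2" "Suc (Suc m)"] assms
    by (intro mult_nonneg_nonneg S_nonneg) simp_all
qed

lemma minor_Suc_nonneg:
  assumes IH: "\<And>j. 0 \<le> minor S m j" "\<And>j. 0 \<le> shifted_minor S m j"
    and k: "0 \<le> k" "k \<le> int m"
  shows "0 \<le> minor S (Suc m) k"
proof -
  note lower = minor_left_term_nonneg[OF IH(1) k]
  have "0 \<le> S m k * minor S (Suc m) k"
  proof (cases "k < int m \<or> 0 \<le> x2")
    case True
    have "0 \<le> lin_coeff x1 x2 x3 (Suc m) (k + 1)"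
      using True A_pos[of "k + 1" "Suc m"] A_pos[of k "Suc m"] k
      by (auto simp: lin_coeff_shift)
    then have "0 \<le> lin_coeff x1 x2 x3 (Suc m) (k + 1) * S (Suc m) k * minor S m k"
      by (intro mult_nonneg_nonneg S_nonneg IH)
    moreover have "0 \<le> y1 * S (Suc m) k * shifted_minor S m (k - 1)"
      by (intro mult_nonneg_nonneg y1_nonneg S_nonneg IH)
    ultimately show ?thesis unfolding S_identities(1) using lower by linarith
  next
    case False
    then have top: "k = int m" and "y2 \<le> 0" using k signs by auto
    define C where "C = x2 * lin_coeff y1 y2 y3 (Suc m) 1 - y2 * lin_coeff x1 x2 x3 (Suc m) 0
        + lin_coeff y1 y2 y3 (Suc (Suc m)) (k + 2) * lin_coeff x1 x2 x3 (Suc m) k"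
    have "0 \<le> C"
      using cross_nonneg[of "Suc m"] B_pos[of "k + 2" "Suc (Suc m)"] A_pos[of k "Suc m"] top k
      unfolding C_def by (simp add: add_nonneg_nonneg)
    then have "0 \<le> C * S m k" by (simp add: S_nonneg)
    moreover have "y1 * y2 * S m (k - 1) \<le> 0"
      using y1_nonneg \<open>y2 \<le> 0\<close> S_nonneg by (simp add: mult_nonneg_nonpos mult_nonpos_nonneg)
    ultimately have "0 \<le> S (Suc m) k * S m k * (C * S m k - y1 * y2 * S m (k - 1))"
      by (intro mult_nonneg_nonneg S_nonneg) linarith
    moreover have "S m (k + 1) = 0" using top by (simp add: S_eq_0)
    ultimately show ?thesis
      unfolding S_identities(3)[OF \<open>S m (k + 1) = 0\<close>] C_def[symmetric] using lower by linarith
  qed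
  then show ?thesis using S_pos[OF k] by (simp add: zero_le_mult_iff)
qed

lemma shifted_minor_Suc_nonneg:
  assumes IH: "\<And>j. 0 \<le> minor S m j" "\<And>j. 0 \<le> shifted_minor S m j"
    and k: "0 \<le> k" "k \<le> int m"
  shows "0 \<le> shifted_minor S (Suc m) k"
proof -
  note upper = shifted_minor_right_term_nonneg[OF IH(2) k]
  have "0 \<le> S m k * shifted_minor S (Suc m) k"
  proof (cases "0 < k \<or> y2 \<le> 0")
    case True
    have "0 \<le> lin_coeff y1 y2 y3 (Suc m) k"
      using True B_pos[of k "Suc m"] B_pos[of 1 "Suc m"] k
      by (cases "k = 0") (auto simp: lin_coeff_def)
    then have "0 \<le> lin_coeff y1 y2 y3 (Suc m) k * S (Suc m) (k + 1) * shifted_minor S m (k - 1)"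
      by (intro mult_nonneg_nonneg S_nonneg IH)
    moreover have "0 \<le> (x1 + x2) * S (Suc m) (k + 1) * minor S m k"
      by (intro mult_nonneg_nonneg x1_x2_nonneg S_nonneg IH)
    ultimately show ?thesis unfolding S_identities(2) using upper by linarith
  next
    case False
    then have bottom: "k = 0" and "0 \<le> x2" using k signs by auto
    define C where "C = x2 * lin_coeff y1 y2 y3 (Suc m) 1 - y2 * lin_coeff x1 x2 x3 (Suc m) 0
        + lin_coeff x1 x2 x3 (Suc (Suc m)) 0 * lin_coeff y1 y2 y3 (Suc m) 1"
    have "0 \<le> C"
      using cross_nonneg[of "Suc m"] A_pos[of 0 "Suc (Suc m)"] B_pos[of 1 "Suc m"]
      unfolding C_def by (simp add: add_nonneg_nonneg)
    then have "0 \<le> C * S m 0" by (simp add: S_nonneg)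
    moreover have "0 \<le> (x1 + x2) * x2 * S m 1"
      by (intro mult_nonneg_nonneg x1_x2_nonneg \<open>0 \<le> x2\<close> S_nonneg)
    ultimately have "0 \<le> S (Suc m) 1 * S m 0 * (C * S m 0 + (x1 + x2) * x2 * S m 1)"
      by (intro mult_nonneg_nonneg S_nonneg) linarith
    moreover have "0 \<le> lin_coeff x1 x2 x3 (Suc (Suc m)) 2 * S (Suc m) 0 * shifted_minor S m 0"
      using upper bottom by simp
    moreover have "S m (-1) = 0" by (simp add: S_eq_0)
    ultimately show ?thesis
      unfolding bottom S_identities(4)[OF \<open>S m (-1) = 0\<close>] C_def[symmetric] by linarith
  qed
  then show ?thesis using S_pos[OF k] by (simp add: zero_le_mult_iff)
qed

lemma minors_nonneg: "0 \<le> minor S m k \<and> 0 \<le> shifted_minor S m k"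
proof (induction m arbitrary: k)
  case 0
  show ?case using S_eq_0 S_nonneg by (intro minors_nonneg_outside) auto
next
  case (Suc m)
  show ?case
  proof (cases "0 \<le> k \<and> k \<le> int m")
    case True
    then show ?thesis using Suc.IH minor_Suc_nonneg shifted_minor_Suc_nonneg by blast
  next
    case False
    then show ?thesis using S_eq_0 S_nonneg by (intro minors_nonneg_outside) auto
  qed
qed

lemma row_ratio_monotone_S: "row_ratio_monotone S"
  using S_eq_0 S_pos minors_nonneg by (intro row_ratio_monotone_if_minors_nonneg) auto

end

lemma row_ratio_monotone_single_support:
  fixes T :: "nat \<Rightarrow> int \<Rightarrow> real" and \<sigma> :: "nat \<Rightarrow> int"
  assumes nonneg: "\<And>n k. 0 \<le> T n k"
    and zero: "\<And>n k. k \<noteq> \<sigma> n \<Longrightarrow> T n k = 0"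
    and step: "\<And>n. \<sigma> n \<le> \<sigma> (Suc n) \<and> \<sigma> (Suc n) \<le> \<sigma> n + 1"
  shows "row_ratio_monotone T"
  unfolding row_ratio_monotone_def
proof (intro allI impI conjI)
  fix m :: nat and I J :: int
  assume "I < J"
  have first: "T m J * T (Suc m) I = 0"
    using zero[of J m] zero[of I "Suc m"] step[of m] \<open>I < J\<close> by (cases "J = \<sigma> m") auto
  have second: "T m I * T (Suc m) (J + 1) = 0"
    using zero[of I m] zero[of "J + 1" "Suc m"] step[of m] \<open>I < J\<close> by (cases "I = \<sigma> m") auto
  show "T m J * T (Suc m) I \<le> T m I * T (Suc m) J"
    unfolding first by (intro mult_nonneg_nonneg nonneg)
  show "T m I * T (Suc m) (J + 1) \<le> T m J * T (Suc m) (I + 1)"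
    unfolding second by (intro mult_nonneg_nonneg nonneg)
qed

lemma row_ratio_monotone_limit:
  assumes "F \<noteq> bot"
    and "eventually (\<lambda>e. row_ratio_monotone (S e)) F"
    and lim: "\<And>n k. ((\<lambda>e. S e n k) \<longlongrightarrow> T n k) F"
  shows "row_ratio_monotone T"
  unfolding row_ratio_monotone_def
proof (intro allI impI conjI)
  fix m :: nat and I J :: int
  assume "I < J"
  with assms(2) have ev:
    "eventually (\<lambda>e. S e m J * S e (Suc m) I \<le> S e m I * S e (Suc m) J) F"
    "eventually (\<lambda>e. S e m I * S e (Suc m) (J + 1) \<le> S e m J * S e (Suc m) (I + 1)) F"
    by (auto elim!: eventually_mono simp: row_ratio_monotone_def)
  show "T m J * T (Suc m) I \<le> T m I * T (Suc m) J"
    by (rule tendsto_le[OF \<open>F \<noteq> bot\<close> tendsto_mult[OF lim lim] tendsto_mult[OF lim lim] ev(1)])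
  show "T m I * T (Suc m) (J + 1) \<le> T m J * T (Suc m) (I + 1)"
    by (rule tendsto_le[OF \<open>F \<noteq> bot\<close> tendsto_mult[OF lim lim] tendsto_mult[OF lim lim] ev(2)])
qed

text \<open>Raising x3, y3 and c by l e, u e and e makes every coefficient inside the triangle positive
  and changes the cross term by e (x2 u - y2 l) \<ge> 0.\<close>

lemma lin_triangle_row_ratio_monotone_perturbed:
  assumes "0 \<le> c"
    and A_nonneg: "\<And>n k. 0 \<le> k \<Longrightarrow> k < int n \<Longrightarrow> 0 \<le> lin_coeff x1 x2 x3 n k"
    and B_nonneg: "\<And>n k. 0 < k \<Longrightarrow> k \<le> int n \<Longrightarrow> 0 \<le> lin_coeff y1 y2 y3 n k"
    and "0 \<le> y1" "0 \<le> x1 + x2" "\<not> (x2 < 0 \<and> 0 < y2)"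
    and cross: "\<And>n. 1 \<le> n \<Longrightarrow> 0 \<le> x2 * lin_coeff y1 y2 y3 n 1 - y2 * lin_coeff x1 x2 x3 n 0"
    and "0 < l" "0 < u" "y2 * l \<le> x2 * u"
  shows "row_ratio_monotone (rec_triangle (lin_coeff x1 x2 x3) (lin_coeff y1 y2 y3) c)"
proof (rule row_ratio_monotone_limit)
  show "(at_right 0 :: real filter) \<noteq> bot" by simp
  have perturbed: "row_ratio_monotone
      (rec_triangle (lin_coeff x1 x2 (x3 + l * e)) (lin_coeff y1 y2 (y3 + u * e)) (c + e))"
    if "0 < e" for e
  proof -
    have shift: "lin_coeff v1 v2 (v3 + w) n k = lin_coeff v1 v2 v3 n k + w" for v1 v2 v3 w n k
      by (simp add: lin_coeff_def)
    interpret positive_lin_triangle x1 x2 "x3 + l * e" y1 y2 "y3 + u * e" "c + e"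
    proof
      have "0 \<le> x2 * lin_coeff y1 y2 y3 n 1 - y2 * lin_coeff x1 x2 x3 n 0 + e * (x2 * u - y2 * l)"
        if "1 \<le> n" for n
        using cross[OF that] \<open>0 < e\<close> \<open>y2 * l \<le> x2 * u\<close> by simp
      then show "\<And>n. 1 \<le> n \<Longrightarrow>
          0 \<le> x2 * lin_coeff y1 y2 (y3 + u * e) n 1 - y2 * lin_coeff x1 x2 (x3 + l * e) n 0"
        by (simp add: shift algebra_simps)
    qed (use \<open>0 \<le> c\<close> A_nonneg B_nonneg assms(4-6) \<open>0 < e\<close> \<open>0 < l\<close> \<open>0 < u\<close>
      in \<open>force simp: shift intro: add_nonneg_pos\<close>)+
    show ?thesis by (rule row_ratio_monotone_S)
  qed
  show "eventually (\<lambda>e. row_ratio_monotone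
      (rec_triangle (lin_coeff x1 x2 (x3 + l * e)) (lin_coeff y1 y2 (y3 + u * e)) (c + e)))
      (at_right 0)"
    using eventually_at_right_less[of "0 :: real"] by (rule eventually_mono) (rule perturbed)
  show "((\<lambda>e. rec_triangle (lin_coeff x1 x2 (x3 + l * e)) (lin_coeff y1 y2 (y3 + u * e)) (c + e) n k)
      \<longlongrightarrow> rec_triangle (lin_coeff x1 x2 x3) (lin_coeff y1 y2 y3) c n k) (at_right 0)" for n k
    by (rule tendsto_rec_triangle) (auto simp: lin_coeff_def intro!: tendsto_eq_intros)
qed

lemma perturbation_direction_cases:
  fixes x2 y2 :: real
  assumes "\<not> (x2 < 0 \<and> 0 < y2)"
  obtains "x2 = 0" "0 < y2" | "x2 < 0" "y2 = 0" | l u :: real where "0 < l" "0 < u" "y2 * l \<le> x2 * u"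
proof -
  consider "x2 \<le> 0" "0 < y2" | "x2 < 0" "y2 = 0" | "0 \<le> x2" "y2 \<le> 0" | "0 < x2" "0 < y2"
    | "x2 < 0" "y2 < 0"
    by linarith
  then show thesis
  proof cases
    case 3
    then show thesis using that(3)[of 1 1] by simp
  next
    case 4
    then show thesis using that(3)[of x2 y2] by (simp add: mult.commute)
  next
    case 5
    then show thesis using that(3)[of "- x2" "- y2"] by (simp add: mult.commute)
  qed (use that assms in auto)
qed

text \<open>If x2 = 0 < y2 the cross condition forces all a-coefficients to vanish, so only the diagonal
  survives; if x2 < 0 = y2 it forces all b-coefficients to vanish, so only the first column survives.\<close>

lemma lin_triangle_row_ratio_monotone:
  assumes "0 \<le> c"
    and A_nonneg: "\<And>n k. 0 \<le> k \<Longrightarrow> k < int n \<Longrightarrow> 0 \<le> lin_coeff x1 x2 x3 n k"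
    and B_nonneg: "\<And>n k. 0 < k \<Longrightarrow> k \<le> int n \<Longrightarrow> 0 \<le> lin_coeff y1 y2 y3 n k"
    and "0 \<le> y1" "0 \<le> x1 + x2" and signs: "\<not> (x2 < 0 \<and> 0 < y2)"
    and cross: "\<And>n. 1 \<le> n \<Longrightarrow> 0 \<le> x2 * lin_coeff y1 y2 y3 n 1 - y2 * lin_coeff x1 x2 x3 n 0"
  shows "row_ratio_monotone (rec_triangle (lin_coeff x1 x2 x3) (lin_coeff y1 y2 y3) c)"
proof -
  have nonneg: "0 \<le> rec_triangle (lin_coeff x1 x2 x3) (lin_coeff y1 y2 y3) c n k" for n k
    using \<open>0 \<le> c\<close> A_nonneg B_nonneg by (rule rec_triangle_nonneg)
  from signs show ?thesis
  proof (cases rule: perturbation_direction_cases)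
    case 1
    have "lin_coeff x1 x2 x3 (Suc n) k = 0" for n k
      using cross[of "Suc n"] A_nonneg[of 0 "Suc n"] 1
      by (simp add: lin_coeff_def mult_le_0_iff)
    then show ?thesis
      using nonneg rec_triangle_diagonal by (intro row_ratio_monotone_single_support[where \<sigma> = int]) auto
  next
    case 2
    have "lin_coeff y1 y2 y3 (Suc n) k = 0" for n k
      using cross[of "Suc n"] B_nonneg[of 1 "Suc n"] 2
      by (simp add: lin_coeff_def zero_le_mult_iff)
    then show ?thesis
      using nonneg rec_triangle_first_column
      by (intro row_ratio_monotone_single_support[where \<sigma> = "\<lambda>_. 0"]) auto
  next
    case 3
    show ?thesis using lin_triangle_row_ratio_monotone_perturbed[OF assms 3] .
  qed
qed

definition conv :: "(int \<Rightarrow> real) \<Rightarrow> (int \<Rightarrow> real) \<Rightarrow> nat \<Rightarrow> real" where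
  "conv p t M = (\<Sum>i\<le>M. p (int i) * t (int M - int i))"

text \<open>\<open>wronski p t M\<close> is the coefficient of q^M in q (P Q' - P' Q), where P and Q are the
  generating polynomials of p and t.\<close>

definition wronski :: "(int \<Rightarrow> real) \<Rightarrow> (int \<Rightarrow> real) \<Rightarrow> nat \<Rightarrow> real" where
  "wronski p t M = (\<Sum>i\<le>M. (real M - 2 * real i) * p (int i) * t (int M - int i))"

lemma sum_conv_wronski:
  "(\<Sum>i\<le>M. (\<alpha> + \<beta> * (real M - 2 * real i)) * p (int i) * t (int M - int i))
    = \<alpha> * conv p t M + \<beta> * wronski p t M"
  unfolding conv_def wronski_def sum_distrib_left sum.distrib[symmetric]
  by (rule sum.cong) (simp_all add: algebra_simps)

lemma sum_nonneg_by_reflection: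
  fixes f :: "nat \<Rightarrow> real"
  assumes "\<And>i. i \<le> M \<Longrightarrow> 0 \<le> f i + f (M - i)"
  shows "0 \<le> (\<Sum>i\<le>M. f i)"
proof -
  have "(\<Sum>i\<le>M. f (M - i)) = (\<Sum>i\<le>M. f i)"
    using sum.nat_diff_reindex[of f "Suc M"] by (simp add: lessThan_Suc_atMost)
  then have "2 * (\<Sum>i\<le>M. f i) = (\<Sum>i\<le>M. f i + f (M - i))"
    by (simp add: sum.distrib)
  also have "0 \<le> \<dots>"
    using assms by (auto intro: sum_nonneg)
  finally show ?thesis by simp
qed

lemma mult_nonneg_same_sign:
  fixes a d :: real
  assumes "0 < a \<Longrightarrow> 0 \<le> d" "a < 0 \<Longrightarrow> d \<le> 0"
  shows "0 \<le> a * d"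
  using assms by (cases a "0 :: real" rule: linorder_cases) (auto simp: mult_nonpos_nonpos)

lemma wronski_nonneg:
  assumes "\<And>I J. I < J \<Longrightarrow> p J * t I \<le> p I * t J"
  shows "0 \<le> wronski p t M"
  unfolding wronski_def
proof (rule sum_nonneg_by_reflection)
  fix i assume "i \<le> M"
  have "(real M - 2 * real i) * p (int i) * t (int M - int i)
      + (real M - 2 * real (M - i)) * p (int (M - i)) * t (int M - int (M - i))
      = (real M - 2 * real i) * (p (int i) * t (int M - int i) - p (int M - int i) * t (int i))"
    using \<open>i \<le> M\<close> by (simp add: of_nat_diff algebra_simps)
  also have "0 \<le> \<dots>"
    using assms[of "int i" "int M - int i"] assms[of "int M - int i" "int i"]
    by (intro mult_nonneg_same_sign) auto
  finally show "0 \<le> (real M - 2 * real i) * p (int i) * t (int M - int i)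
      + (real M - 2 * real (M - i)) * p (int (M - i)) * t (int M - int (M - i))" .
qed

lemma wronski_le_conv:
  assumes "\<And>I J. I < J \<Longrightarrow> p I * t (J + 1) \<le> p J * t (I + 1)"
    and nonneg: "\<And>k. 0 \<le> p k" "\<And>k. 0 \<le> t k"
  shows "wronski p t M \<le> conv p t M"
proof -
  define g where "g i = (2 * real i + 1 - real M) * p (int i) * t (int M - int i)" for i
  have "conv p t M - wronski p t M = (\<Sum>i\<le>M. g i)"
    unfolding conv_def wronski_def g_def sum_subtractf[symmetric] by (simp add: algebra_simps)
  also have "0 \<le> (\<Sum>i\<le>M. g i)"
  proof (cases M)
    case 0
    then show ?thesis by (simp add: g_def nonneg)
  next
    case (Suc M')
    have "0 \<le> (\<Sum>i\<le>M'. g i)"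
    proof (rule sum_nonneg_by_reflection)
      fix i assume "i \<le> M'"
      have "g i + g (M' - i) = (real M' - 2 * real i)
          * (p (int M' - int i) * t (int i + 1) - p (int i) * t (int M' - int i + 1))"
        using \<open>i \<le> M'\<close> Suc by (simp add: g_def of_nat_diff algebra_simps)
      also have "0 \<le> \<dots>"
        using assms(1)[of "int i" "int M' - int i"] assms(1)[of "int M' - int i" "int i"]
        by (intro mult_nonneg_same_sign) auto
      finally show "0 \<le> g i + g (M' - i)" .
    qed
    moreover have "0 \<le> g M" by (simp add: g_def nonneg)
    ultimately show ?thesis using Suc by simp
  qed
  finally show ?thesis by simp
qed

lemma sum_shifted_terms_eq:
  assumes "p (-1) = 0" "t (-1) = 0"
  shows "(\<Sum>i\<le>m. lin_coeff b1 b2 b3 (Suc n) (int m - int i) * p (int i) * t (int m - int i - 1)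
      - lin_coeff b1 b2 b3 n (int i) * p (int i - 1) * t (int m - int i))
    = (if m = 0 then 0 else b1 * conv p t (m - 1) + b2 * wronski p t (m - 1))"
proof -
  define E1 where "E1 i = lin_coeff b1 b2 b3 (Suc n) (int m - int i) * p (int i) * t (int m - int i - 1)"
    for i
  define E2 where "E2 i = lin_coeff b1 b2 b3 n (int i) * p (int i - 1) * t (int m - int i)" for i
  have "(\<Sum>i\<le>m. E1 i) - (\<Sum>i\<le>m. E2 i)
      = (if m = 0 then 0 else b1 * conv p t (m - 1) + b2 * wronski p t (m - 1))"
  proof (cases m)
    case 0
    then show ?thesis using assms by (simp add: E1_def E2_def)
  next
    case (Suc m')
    have "E1 m = 0" "E2 0 = 0" using assms by (simp_all add: E1_def E2_def)
    then have "(\<Sum>i\<le>m. E1 i) - (\<Sum>i\<le>m. E2 i) = (\<Sum>i\<le>m'. E1 i) - (\<Sum>i\<le>m'. E2 (Suc i))"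
      unfolding Suc sum.atMost_Suc_shift[of E2] sum.atMost_Suc[of E1] by simp
    also have "\<dots> = (\<Sum>i\<le>m'. (b1 + b2 * (real m' - 2 * real i)) * p (int i) * t (int m' - int i))"
      unfolding sum_subtractf[symmetric]
    proof (rule sum.cong)
      fix i assume "i \<in> {..m'}"
      have "int m - int i - 1 = int m' - int i" "int m - int (Suc i) = int m' - int i" using Suc by auto
      then show "E1 i - E2 (Suc i) = (b1 + b2 * (real m' - 2 * real i)) * p (int i) * t (int m' - int i)"
        unfolding E1_def E2_def using Suc by (simp add: lin_coeff_def algebra_simps)
    qed simp
    finally show ?thesis using Suc by (simp add: sum_conv_wronski)
  qed
  then show ?thesis by (simp add: E1_def E2_def sum_subtractf)
qed

lemma conv_gap_eq:
  assumes ht: "\<And>k. t k = lin_coeff a1 a2 a3 n k * p k + lin_coeff b1 b2 b3 n k * p (k - 1)"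
    and hs: "\<And>k. s k = lin_coeff a1 a2 a3 (Suc n) k * t k + lin_coeff b1 b2 b3 (Suc n) k * t (k - 1)"
    and "p (-1) = 0" "t (-1) = 0"
  shows "conv p s m - conv t t m = a1 * conv p t m + a2 * wronski p t m
    + (if m = 0 then 0 else b1 * conv p t (m - 1) + b2 * wronski p t (m - 1))"
proof -
  have "conv p s m - conv t t m = (\<Sum>i\<le>m. p (int i) * s (int m - int i) - t (int i) * t (int m - int i))"
    unfolding conv_def by (simp add: sum_subtractf)
  also have "\<dots> = (\<Sum>i\<le>m. (a1 + a2 * (real m - 2 * real i)) * p (int i) * t (int m - int i)
      + (lin_coeff b1 b2 b3 (Suc n) (int m - int i) * p (int i) * t (int m - int i - 1)
         - lin_coeff b1 b2 b3 n (int i) * p (int i - 1) * t (int m - int i)))"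
    unfolding hs ht by (intro sum.cong) (simp_all add: lin_coeff_def algebra_simps)
  finally show ?thesis
    unfolding sum.distrib sum_conv_wronski sum_shifted_terms_eq[of p t, OF assms(3,4)] .
qed

lemma coeff_row_poly:
  assumes "\<And>k. \<not> (0 \<le> k \<and> k \<le> int n) \<Longrightarrow> T n k = 0"
  shows "coeff (row_poly T n) i = T n (int i)"
proof -
  have "coeff (row_poly T n) i = (\<Sum>k\<le>n. if k = i then T n (int k) else 0)"
    unfolding row_poly_def coeff_sum by simp
  also have "\<dots> = (if i \<le> n then T n (int i) else 0)"
    by (simp add: sum.delta'[of "{..n}"] eq_commute)
  also have "\<dots> = T n (int i)"
    using assms[of "int i"] by auto
  finally show ?thesis .
qed

lemma coeff_row_poly_mult:
  assumes "\<And>n k. \<not> (0 \<le> k \<and> k \<le> int n) \<Longrightarrow> T n k = 0"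
  shows "coeff (row_poly T a * row_poly T b) m = conv (T a) (T b) m"
  unfolding coeff_mult conv_def by (intro sum.cong) (simp_all add: coeff_row_poly[OF assms] of_nat_diff)

lemma q_log_convex_row_poly_if_row_ratio_monotone:
  assumes supp: "\<And>n k. \<not> (0 \<le> k \<and> k \<le> int n) \<Longrightarrow> T n k = 0"
    and nonneg: "\<And>n k. 0 \<le> T n k"
    and rec: "\<And>n k. T (Suc n) k =
      lin_coeff a1 a2 a3 (Suc n) k * T n k + lin_coeff b1 b2 b3 (Suc n) k * T n (k - 1)"
    and mono: "row_ratio_monotone T"
    and "0 \<le> a1" "0 \<le> a1 + a2" "0 \<le> b1" "0 \<le> b1 + b2"
  shows "q_log_convex (row_poly T)"
  unfolding q_log_convex_def q_le_def
proof (intro allI impI)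
  fix n m :: nat
  assume "1 \<le> n"
  then obtain r where n: "n = Suc r" by (cases n) auto
  have comb: "0 \<le> \<alpha> * conv (T r) (T (Suc r)) M + \<beta> * wronski (T r) (T (Suc r)) M"
    if "0 \<le> \<alpha>" "0 \<le> \<alpha> + \<beta>" for \<alpha> \<beta> M
  proof -
    have "0 \<le> wronski (T r) (T (Suc r)) M"
      using mono by (intro wronski_nonneg) (auto simp: row_ratio_monotone_def)
    moreover have "wronski (T r) (T (Suc r)) M \<le> conv (T r) (T (Suc r)) M"
      using mono nonneg by (intro wronski_le_conv) (auto simp: row_ratio_monotone_def)
    ultimately have "0 \<le> \<alpha> * (conv (T r) (T (Suc r)) M - wronski (T r) (T (Suc r)) M)
        + (\<alpha> + \<beta>) * wronski (T r) (T (Suc r)) M"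
      using that by simp
    then show ?thesis by (simp add: algebra_simps)
  qed
  have "coeff (row_poly T (n - 1) * row_poly T (n + 1) - (row_poly T n)\<^sup>2) m
      = conv (T r) (T (Suc (Suc r))) m - conv (T (Suc r)) (T (Suc r)) m"
    by (simp add: n power2_eq_square coeff_diff coeff_row_poly_mult[OF supp])
  also have "\<dots> = a1 * conv (T r) (T (Suc r)) m + a2 * wronski (T r) (T (Suc r)) m
    + (if m = 0 then 0 else b1 * conv (T r) (T (Suc r)) (m - 1) + b2 * wronski (T r) (T (Suc r)) (m - 1))"
    by (rule conv_gap_eq) (use rec supp in auto)
  finally show "0 \<le> coeff (row_poly T (n - 1) * row_poly T (n + 1) - (row_poly T n)\<^sup>2) m"
    using comb assms(5-8) by simp
qed

lemma nonneg_slope: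
  fixes \<alpha> \<beta> :: real
  assumes "\<And>n. 1 \<le> n \<Longrightarrow> 0 \<le> \<alpha> * real n + \<beta>"
  shows "0 \<le> \<alpha>"
proof (rule ccontr)
  assume "\<not> 0 \<le> \<alpha>"
  then have "0 < - \<alpha>" by simp
  obtain n :: nat where n: "max 1 (\<beta> / - \<alpha>) < real n"
    using reals_Archimedean2 by blast
  then have "\<beta> < real n * - \<alpha>"
    using pos_divide_less_eq[OF \<open>0 < - \<alpha>\<close>] by (metis max.strict_boundedE)
  then have "\<alpha> * real n + \<beta> < 0" by (simp add: algebra_simps)
  moreover have "1 \<le> n" using n by simp
  ultimately show False using assms[of n] by simp
qed

lemma lin_coeff_slopes_nonneg:
  assumes A: "\<And>n k. 0 \<le> k \<Longrightarrow> k < int n \<Longrightarrow> 0 \<le> lin_coeff a1 a2 a3 n k"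
    and B: "\<And>n k. 0 < k \<Longrightarrow> k \<le> int n \<Longrightarrow> 0 \<le> lin_coeff b1 b2 b3 n k"
  shows "0 \<le> a1" "0 \<le> a1 + a2" "0 \<le> b1" "0 \<le> b1 + b2"
proof -
  show "0 \<le> a1"
    by (rule nonneg_slope[of _ a3]) (use A[of 0] in \<open>simp add: lin_coeff_def\<close>)
  show "0 \<le> a1 + a2"
  proof (rule nonneg_slope[of _ "a3 - a2"])
    show "0 \<le> (a1 + a2) * real n + (a3 - a2)" if "1 \<le> n" for n
      using A[of "int n - 1" n] that by (simp add: lin_coeff_def algebra_simps)
  qed
  show "0 \<le> b1"
    by (rule nonneg_slope[of _ "b2 + b3"]) (use B[of 1] in \<open>simp add: lin_coeff_def algebra_simps\<close>)
  show "0 \<le> b1 + b2"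
  proof (rule nonneg_slope[of _ b3])
    show "0 \<le> (b1 + b2) * real n + b3" if "1 \<le> n" for n
      using B[of "int n" n] that by (simp add: lin_coeff_def algebra_simps)
  qed
qed

lemma slope_sign_condition:
  assumes "0 \<le> a1" "0 \<le> a1 + a2" "0 \<le> b1 + b2"
    and cross: "\<And>n. 1 \<le> n \<Longrightarrow> 0 \<le> a2 * lin_coeff b1 b2 b3 n (int n) - b2 * lin_coeff a1 a2 a3 n 0"
  shows "\<not> (a2 < 0 \<and> 0 < b2)"
proof
  assume signs: "a2 < 0 \<and> 0 < b2"
  have "0 \<le> a2 * (b1 + b2) - a1 * b2"
  proof (rule nonneg_slope[of _ "a2 * b3 - b2 * a3"])
    show "0 \<le> (a2 * (b1 + b2) - a1 * b2) * real n + (a2 * b3 - b2 * a3)" if "1 \<le> n" for n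
      using cross[OF that] by (simp add: lin_coeff_def algebra_simps)
  qed
  moreover have "a2 * (b1 + b2) \<le> 0" "0 \<le> a1 * b2"
    using signs assms(1,3) by (simp_all add: mult_nonpos_nonneg)
  ultimately have "a1 * b2 = 0" by linarith
  then have "a1 = 0" using signs by simp
  then show False using signs assms(2) by simp
qed

theorem theorem4p1:
  fixes a1 a2 a3 b1 b2 b3 :: real
    and T :: "nat \<Rightarrow> int \<Rightarrow> real"
  assumes nonneg: "\<And>n k. T n k \<ge> 0"
    and T00: "T 0 0 \<ge> 0"
    and supp: "\<And>n k. \<not> (0 \<le> k \<and> k \<le> int n) \<Longrightarrow> T n k = 0"
    and rec: "\<And>n k. n \<ge> 1 \<Longrightarrow>
       T n k = (a1 * real n + a2 * real_of_int k + a3) * T (n - 1) k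
             + (b1 * real n + b2 * real_of_int k + b3) * T (n - 1) (k - 1)"
    and a_nonneg: "\<And>n k. 0 \<le> k \<Longrightarrow> k < int n \<Longrightarrow>
       a1 * real n + a2 * real_of_int k + a3 \<ge> 0"
    and b_nonneg: "\<And>n k. 0 < k \<Longrightarrow> k \<le> int n \<Longrightarrow>
       b1 * real n + b2 * real_of_int k + b3 \<ge> 0"
    and cond: "\<And>n k. n \<ge> 1 \<Longrightarrow> 0 < k \<Longrightarrow> k \<le> int n \<Longrightarrow>
       (a2 * b1 - a1 * b2) * real n + a2 * b2 * real_of_int k + (a2 * b3 - a3 * b2) \<ge> 0"
  shows "q_log_convex (row_poly T)"
proof -
  have A: "\<And>n k. 0 \<le> k \<Longrightarrow> k < int n \<Longrightarrow> 0 \<le> lin_coeff a1 a2 a3 n k"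
    and B: "\<And>n k. 0 < k \<Longrightarrow> k \<le> int n \<Longrightarrow> 0 \<le> lin_coeff b1 b2 b3 n k"
    using a_nonneg b_nonneg by (simp_all add: lin_coeff_def)
  have cross: "\<And>n k. 1 \<le> n \<Longrightarrow> 0 < k \<Longrightarrow> k \<le> int n \<Longrightarrow>
      0 \<le> a2 * lin_coeff b1 b2 b3 n k - b2 * lin_coeff a1 a2 a3 n 0"
    using cond by (simp add: lin_coeff_def algebra_simps)
  note slopes = lin_coeff_slopes_nonneg[OF A B]
  have signs: "\<not> (a2 < 0 \<and> 0 < b2)"
    using slopes cross by (intro slope_sign_condition[where ?a3.0 = a3 and ?b3.0 = b3]) auto
  have rec_Suc: "\<And>n k. T (Suc n) k =
      lin_coeff a1 a2 a3 (Suc n) k * T n k + lin_coeff b1 b2 b3 (Suc n) k * T n (k - 1)"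
    using rec by (simp add: lin_coeff_def)
  have "T = rec_triangle (lin_coeff a1 a2 a3) (lin_coeff b1 b2 b3) (T 0 0)"
    using supp rec_Suc by (intro rec_triangle_unique) auto
  moreover have "row_ratio_monotone (rec_triangle (lin_coeff a1 a2 a3) (lin_coeff b1 b2 b3) (T 0 0))"
    using T00 A B slopes signs cross by (intro lin_triangle_row_ratio_monotone) auto
  ultimately have "row_ratio_monotone T" by simp
  from q_log_convex_row_poly_if_row_ratio_monotone[OF supp nonneg rec_Suc this slopes]
  show ?thesis .
qed

end
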